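(* The structure $\mathbb{Q}_2$ is an extension of $\mathbf{S}(2)$; that is, $p(\mathbb{Q}_2)$ is isomorphic to $\mathbf{S}(2)$.
   Context: $\mathbf{S}(2)$ is the tournament whose vertices are the points of the unit circle of $\mathbb{C}$ with rational argument, with an arc from $x$ to $y$ iff $0<\arg(y/x)<\pi$. $\mathbb{Q}_2=(\mathbb{Q},<,Q_1,Q_2)$ where $<$ is the usual order of the rationals and $(Q_1,Q_2)$ is a partition of $\mathbb{Q}$ into two dense subsets. For a structure $\mathbf{A}=(A,<^{\mathbf{A}},P_1,P_2)$ with $<^{\mathbf{A}}$ a linear order and $(P_1,P_2)$ a partition of $A$, writing $a\sim b$ when $a,b$ lie in the same part, $p(\mathbf{A})$ is the tournament on $A$ with an arc from $a$ to $b$ iff either ($a\sim b$ and $a<^{\mathbf{A}}b$) or ($a\not\sim b$ and $b<^{\mathbf{A}}a$). An extension of a tournament $\mathbf{X}$ is any such $\mathbf{A}$ with $p(\mathbf{A})=\mathbf{X}$ (up to isomorphism). *)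

theory Defs
  imports "HOL-Analysis.Analysis"
begin

definition S2_vertices :: "complex set" where
  "S2_vertices = {z. cmod z = 1 \<and> Arg z \<in> \<rat>}"

definition S2_arc :: "complex \<Rightarrow> complex \<Rightarrow> bool" where
  "S2_arc x y \<longleftrightarrow> 0 < Arg (y / x) \<and> Arg (y / x) < pi"

definition dense_in_rat :: "rat set \<Rightarrow> bool" where
  "dense_in_rat Q \<longleftrightarrow> (\<forall>a b. a < b \<longrightarrow> (\<exists>q\<in>Q. a < q \<and> q < b))"

definition p_arc :: "('a \<Rightarrow> 'a \<Rightarrow> bool) \<Rightarrow> 'a set \<Rightarrow> 'a set \<Rightarrow> 'a \<Rightarrow> 'a \<Rightarrow> bool" where
  "p_arc lt P1 P2 a b \<longleftrightarrow>
     (let same = ((a \<in> P1 \<and> b \<in> P1) \<or> (a \<in> P2 \<and> b \<in> P2))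
      in (same \<and> lt a b) \<or> (\<not> same \<and> lt b a))"

definition digraph_iso :: "'a set \<Rightarrow> ('a \<Rightarrow> 'a \<Rightarrow> bool) \<Rightarrow> 'b set \<Rightarrow> ('b \<Rightarrow> 'b \<Rightarrow> bool) \<Rightarrow> ('a \<Rightarrow> 'b) \<Rightarrow> bool" where
  "digraph_iso A R B S f \<longleftrightarrow> bij_betw f A B \<and> (\<forall>a\<in>A. \<forall>b\<in>A. R a b \<longleftrightarrow> S (f a) (f b))"

end

theory Submission
  imports Defs "HOL-Computational_Algebra.Polynomial"
begin

text \<open>Because \<open>pi\<close> is irrational, every vertex of \<open>S(2)\<close> is uniquely of the form \<open>cis u\<close> with
  \<open>u\<close> rational or \<open>-cis u\<close> with \<open>u\<close> irrational, where \<open>\<bar>u\<bar> < pi/2\<close>. In these coordinates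
  \<open>arg(y/x)\<close> is \<open>v - u\<close> when the two angles have the same colour (rational or not) and
  \<open>v - u \<plusminus> pi\<close> otherwise, so the arcs of \<open>S(2)\<close> are those of \<open>p\<close> applied to the angles
  ordered as reals and coloured by rationality. This coloured order is countable and both colours
  are dense and unbounded in it, just as in \<open>\<rat>\<^sub>2\<close>, so Cantor's back-and-forth argument
  identifies the two.\<close>

section \<open>Irrationality of \<open>pi\<close>\<close>

definition int_coeffs :: "'a::ring_1 poly \<Rightarrow> bool" where
  "int_coeffs p \<longleftrightarrow> (\<forall>i. coeff p i \<in> \<int>)"

lemma int_coeffs_mult: "int_coeffs p \<Longrightarrow> int_coeffs q \<Longrightarrow> int_coeffs (p * q :: 'a::comm_ring_1 poly)"
  by (auto simp: int_coeffs_def coeff_mult intro!: Ints_sum Ints_mult)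

lemma int_coeffs_power: "int_coeffs p \<Longrightarrow> int_coeffs (p ^ n :: 'a::comm_ring_1 poly)"
  by (induction n) (simp_all add: int_coeffs_mult, simp add: int_coeffs_def coeff_1)

lemma int_coeffs_linear: "int_coeffs [:of_int a, of_int b:]"
  by (auto simp: int_coeffs_def coeff_pCons split: nat.split)

lemma higher_pderiv_monom_mult_0_Ints:
  fixes R :: "real poly"
  assumes "int_coeffs R"
  shows "poly ((pderiv ^^ k) (monom 1 n * R)) 0 / fact n \<in> \<int>"
proof (cases "k < n")
  case False
  have "fact n dvd (fact k :: nat)" using False by (simp add: fact_dvd)
  then have "(fact k :: real) / fact n = real (fact k div fact n)" by (simp add: real_of_nat_div)
  then have "(fact k :: real) / fact n \<in> \<int>" by simp
  moreover have "coeff R (k - n) \<in> \<int>" using assms by (simp add: int_coeffs_def)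
  ultimately show ?thesis using False
    by (simp add: poly_0_coeff_0 coeff_higher_pderiv coeff_monom_mult pochhammer_fact)
       (metis Ints_mult times_divide_eq_left mult.commute)
qed (simp add: poly_0_coeff_0 coeff_higher_pderiv coeff_monom_mult)

lemma poly_higher_pderiv_pcompose_shift:
  "poly ((pderiv ^^ k) (pcompose p [:c, 1:])) x = poly ((pderiv ^^ k) p) (c + x)"
  for c :: "'a::idom"
proof -
  have "(pderiv ^^ k) (pcompose p [:c, 1:]) = pcompose ((pderiv ^^ k) p) [:c, 1:]"
    by (induction k) (auto simp: pderiv_pcompose pderiv_pCons)
  then show ?thesis by (simp add: poly_pcompose)
qed

lemma alternating_pderiv_sum_ode:
  fixes p :: "'a::{idom,ring_char_0} poly"
  assumes "degree p < 2 * n + 2"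
  defines "F \<equiv> \<Sum>j\<le>n. smult ((-1)^j) ((pderiv ^^ (2*j)) p)"
  shows "pderiv (pderiv F) + F = p"
proof -
  have telescope: "(\<Sum>j\<le>m. smult ((-1)^j) ((pderiv ^^ (2*j+2)) p)) + (\<Sum>j\<le>m. smult ((-1)^j) ((pderiv ^^ (2*j)) p))
     = p + smult ((-1)^m) ((pderiv ^^ (2*m+2)) p)" for m
    by (induction m) (simp_all add: algebra_simps)
  have vanish: "(pderiv ^^ k) p = 0" if "degree p < k" for k
    by (rule poly_eqI) (use that in \<open>simp add: coeff_higher_pderiv coeff_eq_0\<close>)
  have "(pderiv ^^ (2*n+2)) p = 0" using vanish assms(1) by blast
  moreover have "(pderiv ^^ 2) F = (\<Sum>j\<le>n. smult ((-1)^j) ((pderiv ^^ (2*j+2)) p))"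
    unfolding F_def higher_pderiv_sum higher_pderiv_smult by (simp add: numeral_2_eq_2)
  ultimately show ?thesis using telescope[of n] by (simp add: F_def numeral_2_eq_2)
qed

lemma poly_sin_mean_value:
  fixes F P :: "real poly"
  assumes "pderiv (pderiv F) + F = P"
  shows "\<exists>z. 0 < z \<and> z < pi \<and> poly F pi + poly F 0 = pi * (poly P z * sin z)"
proof -
  define G where "G x = poly (pderiv F) x * sin x - poly F x * cos x" for x
  have "DERIV G x :> poly P x * sin x" for x
  proof -
    have "DERIV G x :> (poly (pderiv (pderiv F)) x * sin x + poly (pderiv F) x * cos x)
         - (poly (pderiv F) x * cos x + poly F x * (- sin x))"
      unfolding G_def by (auto intro!: derivative_eq_intros)
    moreover have "(poly (pderiv (pderiv F)) x * sin x + poly (pderiv F) x * cos x)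
         - (poly (pderiv F) x * cos x + poly F x * (- sin x)) = poly (pderiv (pderiv F) + F) x * sin x"
      by (simp add: algebra_simps)
    ultimately show ?thesis using assms by simp
  qed
  then obtain z where "0 < z" "z < pi" "G pi - G 0 = (pi - 0) * (poly P z * sin z)"
    using MVT2[of 0 pi G "\<lambda>x. poly P x * sin x"] by auto
  then show ?thesis by (auto simp: G_def)
qed

definition niven_poly :: "nat \<Rightarrow> int \<Rightarrow> int \<Rightarrow> real poly" where
  "niven_poly n a b = monom 1 n * [:of_int a, of_int (-b):] ^ n"

lemma poly_niven_poly: "poly (niven_poly n a b) x = x ^ n * (of_int a - of_int b * x) ^ n"
  by (simp add: niven_poly_def poly_monom mult.commute)

lemma degree_niven_poly: "degree (niven_poly n a b) \<le> 2 * n"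
proof -
  have "degree (niven_poly n a b) \<le> degree (monom 1 n :: real poly) + degree ([:of_int a, of_int (-b):] ^ n :: real poly)"
    unfolding niven_poly_def by (rule degree_mult_le)
  also have "\<dots> \<le> n + 1 * n"
    by (intro add_mono degree_monom_le degree_power_le[THEN order.trans]) auto
  finally show ?thesis by simp
qed

lemma niven_poly_reflect:
  assumes "of_int a = of_int b * c"
  shows "pcompose (niven_poly n a b) [:c, 1:] = smult ((-1) ^ n) (monom 1 n * [:of_int a, of_int b:] ^ n)"
proof (rule poly_ext)
  fix t
  have "poly (pcompose (niven_poly n a b) [:c, 1:]) t = ((c + t) * (of_int a - of_int b * (c + t))) ^ n"
    by (simp add: poly_pcompose poly_niven_poly power_mult_distrib)
  also have "(c + t) * (of_int a - of_int b * (c + t)) = - (t * (of_int a + t * of_int b))"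
    using assms by (simp add: algebra_simps)
  also have "(- (t * (of_int a + t * of_int b))) ^ n = (-1) ^ n * (t ^ n * (of_int a + t * of_int b) ^ n)"
    by (subst power_minus) (simp add: power_mult_distrib)
  finally show "poly (pcompose (niven_poly n a b) [:c, 1:]) t = poly (smult ((-1) ^ n) (monom 1 n * [:of_int a, of_int b:] ^ n)) t"
    by (simp add: poly_monom)
qed

lemma niven_poly_higher_pderiv_Ints:
  assumes "of_int a = of_int b * c"
  shows "poly ((pderiv ^^ k) (niven_poly n a b)) 0 / fact n \<in> \<int>"
    and "poly ((pderiv ^^ k) (niven_poly n a b)) c / fact n \<in> \<int>"
proof -
  show "poly ((pderiv ^^ k) (niven_poly n a b)) 0 / fact n \<in> \<int>"
    unfolding niven_poly_def
    by (intro higher_pderiv_monom_mult_0_Ints int_coeffs_power int_coeffs_linear)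
  have "poly ((pderiv ^^ k) (niven_poly n a b)) c = poly ((pderiv ^^ k) (pcompose (niven_poly n a b) [:c, 1:])) 0"
    by (simp add: poly_higher_pderiv_pcompose_shift)
  also have "\<dots> = (-1) ^ n * poly ((pderiv ^^ k) (monom 1 n * [:of_int a, of_int b:] ^ n)) 0"
    by (simp add: niven_poly_reflect[OF assms] higher_pderiv_smult)
  finally have "poly ((pderiv ^^ k) (niven_poly n a b)) c / fact n
      = (-1) ^ n * (poly ((pderiv ^^ k) (monom 1 n * [:of_int a, of_int b:] ^ n)) 0 / fact n)"
    by (simp only: times_divide_eq_right)
  then show "poly ((pderiv ^^ k) (niven_poly n a b)) c / fact n \<in> \<int>"
    by (simp only:) (intro Ints_mult Ints_power Ints_minus Ints_1 higher_pderiv_monom_mult_0_Ints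
        int_coeffs_power int_coeffs_linear)
qed

text \<open>Niven's argument: if \<open>pi = a/b\<close>, then \<open>(F(pi) + F(0))/n!\<close> is an integer for the
  Niven polynomial \<open>P\<close>, yet by the mean value theorem it equals \<open>pi P(z) sin z / n!\<close>, which lies
  strictly between 0 and 1 for large \<open>n\<close>.\<close>

lemma pi_not_rat: "pi \<notin> \<rat>"
proof
  assume "pi \<in> \<rat>"
  then obtain a b :: int where "b > 0" and "pi = of_int a / of_int b"
    by (auto elim: Rats_cases')
  then have ab: "of_int a = of_int b * pi"
    by (simp add: field_simps)
  have "(\<lambda>n. inverse (fact n) * (pi * of_int a) ^ n) \<longlonglongrightarrow> 0"
    by (rule summable_LIMSEQ_zero[OF summable_exp])
  then have "eventually (\<lambda>n. inverse (fact n) * (pi * of_int a) ^ n < 1 / pi) sequentially"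
    by (rule order_tendstoD) simp
  then obtain n where small: "inverse (fact n) * (pi * of_int a) ^ n < 1 / pi"
    by (auto simp: eventually_sequentially)
  define P where "P = niven_poly n a b"
  define F where "F = (\<Sum>j\<le>n. smult ((-1)^j) ((pderiv ^^ (2*j)) P))"
  define N where "N = (poly F pi + poly F 0) / fact n"
  have "N = (\<Sum>j\<le>n. (-1)^j * (poly ((pderiv ^^ (2*j)) P) pi / fact n))
         + (\<Sum>j\<le>n. (-1)^j * (poly ((pderiv ^^ (2*j)) P) 0 / fact n))"
    by (simp add: N_def F_def poly_sum add_divide_distrib sum_divide_distrib)
  also have "\<dots> \<in> \<int>"
    using niven_poly_higher_pderiv_Ints[OF ab] by (intro Ints_add Ints_sum Ints_mult) (auto simp: P_def)
  finally have "N \<in> \<int>" .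
  have "pderiv (pderiv F) + F = P"
    unfolding F_def by (rule alternating_pderiv_sum_ode) (use degree_niven_poly[of n a b] in \<open>simp add: P_def\<close>)
  then obtain z where z: "0 < z" "z < pi" and N: "N = pi * (poly P z * sin z) / fact n"
    using poly_sin_mean_value unfolding N_def by metis
  have "0 < of_int a - of_int b * z" "of_int a - of_int b * z \<le> of_int a"
    using ab z \<open>b > 0\<close> by auto
  then have "0 < poly P z" "poly P z \<le> (pi * of_int a) ^ n"
    using z by (auto simp: P_def poly_niven_poly power_mult_distrib intro!: mult_mono power_mono)
  moreover have "0 < sin z" "sin z \<le> 1" using z by (auto intro: sin_gt_zero)
  ultimately have "0 < poly P z * sin z" "poly P z * sin z \<le> (pi * of_int a) ^ n"
    by (auto intro: order.trans[OF mult_right_le_one_le])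
  then have "0 < N" "N \<le> pi * (pi * of_int a) ^ n / fact n"
    unfolding N by (auto intro!: divide_right_mono mult_left_mono)
  moreover have "pi * (pi * of_int a) ^ n / fact n < 1" using small pi_gt_zero by (simp add: field_simps)
  ultimately have "0 < N" "N < 1" by linarith+
  with \<open>N \<in> \<int>\<close> show False by (auto elim!: Ints_cases)
qed

section \<open>Back and forth for coloured dense orders\<close>

text \<open>Every finite cut can be filled by a point of any prescribed colour. For countable
  coloured orders this determines the structure up to isomorphism.\<close>

definition coloured_ext_prop :: "'a::linorder set \<Rightarrow> ('a \<Rightarrow> bool) \<Rightarrow> bool" where
  "coloured_ext_prop Y d \<longleftrightarrow>
     (\<forall>S T col. finite S \<longrightarrow> finite T \<longrightarrow> S \<subseteq> Y \<longrightarrow> T \<subseteq> Y \<longrightarrow> (\<forall>s\<in>S. \<forall>t\<in>T. s < t) \<longrightarrow>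
        (\<exists>y\<in>Y. d y = col \<and> (\<forall>s\<in>S. s < y) \<and> (\<forall>t\<in>T. y < t)))"

lemma coloured_ext_propD:
  assumes "coloured_ext_prop Y d" "finite S" "finite T" "S \<subseteq> Y" "T \<subseteq> Y" "\<forall>s\<in>S. \<forall>t\<in>T. s < t"
  shows "\<exists>y\<in>Y. d y = col \<and> (\<forall>s\<in>S. s < y) \<and> (\<forall>t\<in>T. y < t)"
  using assms unfolding coloured_ext_prop_def by simp

lemma coloured_ext_prop_nonempty: "coloured_ext_prop Y d \<Longrightarrow> Y \<noteq> {}"
  using coloured_ext_propD[of Y d "{}" "{}"] by auto

definition partial_iso :: "('a::linorder \<Rightarrow> bool) \<Rightarrow> ('b::linorder \<Rightarrow> bool) \<Rightarrow> ('a \<times> 'b) set \<Rightarrow> bool" where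
  "partial_iso c d R \<longleftrightarrow> (\<forall>(a, b)\<in>R. \<forall>(a', b')\<in>R. (a < a' \<longleftrightarrow> b < b') \<and> (c a \<longleftrightarrow> d b))"

lemma partial_isoD:
  assumes "partial_iso c d R" "(a, b) \<in> R" "(a', b') \<in> R"
  shows "a < a' \<longleftrightarrow> b < b'" and "c a \<longleftrightarrow> d b"
  using assms unfolding partial_iso_def by blast+

lemma partial_iso_converse: "partial_iso d c (R\<inverse>) \<longleftrightarrow> partial_iso c d R"
  unfolding partial_iso_def by blast

lemma partial_iso_insert:
  "partial_iso c d (insert (x, y) R) \<longleftrightarrow>
     partial_iso c d R \<and> c x = d y \<and> (\<forall>(a, b)\<in>R. (a < x \<longleftrightarrow> b < y) \<and> (x < a \<longleftrightarrow> y < b))"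
  unfolding partial_iso_def by auto

lemma partial_iso_extend:
  assumes "finite R" "partial_iso c d R" "Range R \<subseteq> Y" "coloured_ext_prop Y d"
  shows "\<exists>y\<in>Y. partial_iso c d (insert (x, y) R)"
proof (cases "x \<in> Domain R")
  case True
  then obtain y where "(x, y) \<in> R" by blast
  then have "y \<in> Y" "insert (x, y) R = R" using assms(3) by auto
  with assms(2) show ?thesis by (intro bexI[of _ y]) simp_all
next
  case False
  define S where "S = {b. \<exists>a. (a, b) \<in> R \<and> a < x}"
  define T where "T = {b. \<exists>a. (a, b) \<in> R \<and> x < a}"
  have "S \<subseteq> Range R" "T \<subseteq> Range R" unfolding S_def T_def by blast+
  then have "finite S" "finite T" using finite_Range[OF assms(1)] by (metis finite_subset)+
  moreover have "S \<subseteq> Y" "T \<subseteq> Y" using assms(3) by (auto simp: S_def T_def)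
  moreover have "\<forall>s\<in>S. \<forall>t\<in>T. s < t"
  proof (intro ballI)
    fix s t assume "s \<in> S" "t \<in> T"
    then obtain a a' where "(a, s) \<in> R" "a < x" "(a', t) \<in> R" "x < a'" by (auto simp: S_def T_def)
    then show "s < t" using partial_isoD(1)[OF assms(2)] by (meson order.strict_trans)
  qed
  ultimately obtain y where y: "y \<in> Y" "d y = c x" "\<forall>s\<in>S. s < y" "\<forall>t\<in>T. y < t"
    using coloured_ext_propD[OF assms(4), of S T "c x"] by blast
  have "(a < x \<longleftrightarrow> b < y) \<and> (x < a \<longleftrightarrow> y < b)" if "(a, b) \<in> R" for a b
  proof -
    have "a < x \<or> x < a" using False that by (metis Domain.DomainI neqE)
    with y that show ?thesis by (auto simp: S_def T_def)
  qed
  with y assms(2) show ?thesis by (auto simp: partial_iso_insert)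
qed

lemma partial_iso_extend_back:
  assumes "finite R" "partial_iso c d R" "Domain R \<subseteq> X" "coloured_ext_prop X c"
  shows "\<exists>x\<in>X. partial_iso c d (insert (x, y) R)"
proof -
  obtain x where "x \<in> X" "partial_iso d c (insert (y, x) (R\<inverse>))"
    using partial_iso_extend[of "R\<inverse>" d c X y] assms by (auto simp: partial_iso_converse)
  moreover have "insert (y, x) (R\<inverse>) = (insert (x, y) R)\<inverse>" by auto
  ultimately show ?thesis by (auto simp: partial_iso_converse)
qed

lemma partial_iso_imp_iso:
  assumes "partial_iso c d F" "Domain F = X" "Range F = Y"
  shows "\<exists>h. bij_betw h X Y \<and> (\<forall>a\<in>X. \<forall>b\<in>X. a < b \<longleftrightarrow> h a < h b) \<and> (\<forall>a\<in>X. c a = d (h a))"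
proof -
  define h where "h x = (SOME y. (x, y) \<in> F)" for x
  have hF: "(x, h x) \<in> F" if "x \<in> X" for x
    using that assms(2) unfolding h_def by (auto intro: someI)
  have ord: "\<forall>a\<in>X. \<forall>b\<in>X. a < b \<longleftrightarrow> h a < h b" and col: "\<forall>a\<in>X. c a = d (h a)"
    using assms(1) hF unfolding partial_iso_def by fast+
  have "inj_on h X"
    by (rule inj_onI) (metis ord less_irrefl neqE)
  moreover have "h ` X = Y"
  proof
    show "h ` X \<subseteq> Y" using hF assms(3) by blast
    show "Y \<subseteq> h ` X"
    proof
      fix y assume "y \<in> Y"
      then obtain x where x: "(x, y) \<in> F" using assms(3) by blast
      then have "x \<in> X" using assms(2) by blast
      have "\<not> h x < y" "\<not> y < h x" using assms(1) x hF[OF \<open>x \<in> X\<close>] unfolding partial_iso_def by fast+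
      then show "y \<in> h ` X" using \<open>x \<in> X\<close> by (metis image_eqI neqE)
    qed
  qed
  ultimately show ?thesis using ord col unfolding bij_betw_def by blast
qed

lemma partial_iso_extend_both:
  assumes "finite R" "partial_iso c d R" "R \<subseteq> X \<times> Y" "x \<in> X" "y \<in> Y"
    and "coloured_ext_prop X c" "coloured_ext_prop Y d"
  shows "\<exists>R'. finite R' \<and> partial_iso c d R' \<and> R' \<subseteq> X \<times> Y \<and> R \<subseteq> R' \<and> x \<in> Domain R' \<and> y \<in> Range R'"
proof -
  obtain y' where y': "y' \<in> Y" "partial_iso c d (insert (x, y') R)"
    using partial_iso_extend[OF assms(1,2) _ assms(7)] assms(3) by blast
  moreover have "Domain (insert (x, y') R) \<subseteq> X" using assms(3,4) by auto
  ultimately obtain x' where x': "x' \<in> X" "partial_iso c d (insert (x', y) (insert (x, y') R))"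
    using partial_iso_extend_back assms(1,6) by (metis finite_insert)
  show ?thesis
  proof (intro exI conjI)
    show "partial_iso c d (insert (x', y) (insert (x, y') R))" by (fact x'(2))
  qed (use assms(1,3-5) x'(1) y'(1) in auto)
qed

lemma partial_iso_UN_chain:
  assumes "\<And>n. partial_iso c d (f n)" "\<And>n. f n \<subseteq> f (Suc n)"
  shows "partial_iso c d (\<Union>n. f n)"
  unfolding partial_iso_def
proof (intro ballI, clarify)
  fix a b a' b' m n assume "(a, b) \<in> f m" "(a', b') \<in> f n"
  then have "(a, b) \<in> f (max m n)" "(a', b') \<in> f (max m n)"
    using lift_Suc_mono_le[of f, OF assms(2)] by (meson max.cobounded1 max.cobounded2 subsetD)+
  then show "(a < a' \<longleftrightarrow> b < b') \<and> (c a \<longleftrightarrow> d b)"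
    using partial_isoD[OF assms(1)] by blast
qed

theorem back_and_forth:
  fixes X :: "'a::linorder set" and Y :: "'b::linorder set"
  assumes "countable X" "countable Y" "coloured_ext_prop X c" "coloured_ext_prop Y d"
  shows "\<exists>h. bij_betw h X Y \<and> (\<forall>a\<in>X. \<forall>b\<in>X. a < b \<longleftrightarrow> h a < h b) \<and> (\<forall>a\<in>X. c a = d (h a))"
proof -
  have "X \<noteq> {}" "Y \<noteq> {}" using assms(3,4) by (auto dest: coloured_ext_prop_nonempty)
  then have enum: "from_nat_into X n \<in> X" "from_nat_into Y n \<in> Y" for n
    by (simp_all add: from_nat_into)
  define good where "good R \<longleftrightarrow> finite R \<and> partial_iso c d R \<and> R \<subseteq> X \<times> Y" for R
  have "good {}" by (simp add: good_def partial_iso_def)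
  moreover have "\<exists>R'. good R' \<and> R \<subseteq> R' \<and> from_nat_into X n \<in> Domain R' \<and> from_nat_into Y n \<in> Range R'"
    if "good R" for R n
  proof -
    have "finite R" "partial_iso c d R" "R \<subseteq> X \<times> Y" using that by (simp_all add: good_def)
    from partial_iso_extend_both[OF this enum assms(3,4)] obtain R' where
      "finite R'" "partial_iso c d R'" "R' \<subseteq> X \<times> Y" "R \<subseteq> R'"
      "from_nat_into X n \<in> Domain R'" "from_nat_into Y n \<in> Range R'"
      by blast
    then show ?thesis by (intro exI[of _ R']) (simp add: good_def)
  qed
  ultimately obtain f where f: "\<And>n. good (f n)" "\<And>n. f n \<subseteq> f (Suc n)"
    "\<And>n. from_nat_into X n \<in> Domain (f (Suc n)) \<and> from_nat_into Y n \<in> Range (f (Suc n))"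
    using dependent_nat_choice[of "\<lambda>_. good"
        "\<lambda>n R R'. R \<subseteq> R' \<and> from_nat_into X n \<in> Domain R' \<and> from_nat_into Y n \<in> Range R'"]
    by blast
  have "partial_iso c d (\<Union>n. f n)"
    using f(1,2) by (intro partial_iso_UN_chain) (auto simp: good_def)
  moreover have "range (from_nat_into X) \<subseteq> Domain (\<Union>n. f n)"
    "range (from_nat_into Y) \<subseteq> Range (\<Union>n. f n)"
    using f(3) by blast+
  moreover have "Domain (\<Union>n. f n) \<subseteq> X" "Range (\<Union>n. f n) \<subseteq> Y"
    using f(1) by (auto simp: good_def)
  ultimately show ?thesis
    using \<open>X \<noteq> {}\<close> \<open>Y \<noteq> {}\<close> assms(1,2) by (intro partial_iso_imp_iso) auto
qed

lemma coloured_ext_propI: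
  fixes Y :: "'a::linorder set"
  assumes between: "\<And>lo hi col. lo \<in> Y \<Longrightarrow> hi \<in> Y \<Longrightarrow> lo < hi \<Longrightarrow> \<exists>y\<in>Y. d y = col \<and> lo < y \<and> y < hi"
    and below: "\<And>hi col. hi \<in> Y \<Longrightarrow> \<exists>y\<in>Y. d y = col \<and> y < hi"
    and above: "\<And>lo col. lo \<in> Y \<Longrightarrow> \<exists>y\<in>Y. d y = col \<and> lo < y"
    and "Y \<noteq> {}"
  shows "coloured_ext_prop Y d"
  unfolding coloured_ext_prop_def
proof (intro allI impI)
  fix S T col assume S: "finite S" "S \<subseteq> Y" and T: "finite T" "T \<subseteq> Y" and ST: "\<forall>s\<in>S. \<forall>t\<in>T. s < t"
  show "\<exists>y\<in>Y. d y = col \<and> (\<forall>s\<in>S. s < y) \<and> (\<forall>t\<in>T. y < t)"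
  proof (cases "S = {}"; cases "T = {}")
    assume "S = {}" "T = {}"
    then show ?thesis using below[of _ col] \<open>Y \<noteq> {}\<close> by blast
  next
    assume "S = {}" "T \<noteq> {}"
    moreover have "Min T \<in> Y" using Min_in[OF T(1) \<open>T \<noteq> {}\<close>] T(2) by blast
    then obtain y where "y \<in> Y" "d y = col" "y < Min T" using below by blast
    ultimately show ?thesis using T by auto
  next
    assume "S \<noteq> {}" "T = {}"
    moreover have "Max S \<in> Y" using Max_in[OF S(1) \<open>S \<noteq> {}\<close>] S(2) by blast
    then obtain y where "y \<in> Y" "d y = col" "Max S < y" using above by blast
    ultimately show ?thesis using S by auto
  next
    assume "S \<noteq> {}" "T \<noteq> {}"
    then have "Max S < Min T" using S T ST by auto
    moreover have "Max S \<in> Y" "Min T \<in> Y"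
      using Max_in[OF S(1) \<open>S \<noteq> {}\<close>] Min_in[OF T(1) \<open>T \<noteq> {}\<close>] S(2) T(2) by blast+
    ultimately obtain y where "y \<in> Y" "d y = col" "Max S < y" "y < Min T" using between by blast
    then show ?thesis using S T \<open>S \<noteq> {}\<close> \<open>T \<noteq> {}\<close> by auto
  qed
qed

lemma coloured_ext_prop_rat:
  fixes Q1 Q2 :: "rat set"
  assumes "Q1 \<inter> Q2 = {}" "dense_in_rat Q1" "dense_in_rat Q2"
  shows "coloured_ext_prop UNIV (\<lambda>q. q \<in> Q1)"
proof -
  have between: "\<exists>q. (q \<in> Q1) = col \<and> lo < q \<and> q < hi" if "lo < hi" for lo hi :: rat and col
    using assms that unfolding dense_in_rat_def by (cases col) blast+
  show ?thesis
  proof (rule coloured_ext_propI)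
    show "\<exists>y\<in>UNIV. (y \<in> Q1) = col \<and> y < hi" for hi col
      using between[of "hi - 1" hi col] by auto
    show "\<exists>y\<in>UNIV. (y \<in> Q1) = col \<and> lo < y" for lo col
      using between[of lo "lo + 1" col] by auto
  qed (use between in auto)
qed

section \<open>Angle coordinates on \<open>S(2)\<close>\<close>

definition angle_vertex :: "real \<Rightarrow> complex" where
  "angle_vertex u = (if u \<in> \<rat> then cis u else - cis u)"

definition S2_angles :: "real set" where
  "S2_angles = {u. - (pi / 2) < u \<and> u < pi / 2 \<and> Arg (angle_vertex u) \<in> \<rat>}"

lemma minus_cis_plus_pi: "- cis (x + pi) = cis x"
  and minus_cis_minus_pi: "- cis (x - pi) = cis x"
  by (simp_all add: complex_eq_iff)

lemma pi_shift_not_rat: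
  assumes "q \<in> \<rat>"
  shows "q + pi \<notin> \<rat>" and "q - pi \<notin> \<rat>"
  using Rats_diff[of "q + pi" q] Rats_diff[of q "q - pi"] assms pi_not_rat by auto

lemma pi_half_not_rat: "pi / 2 \<notin> \<rat>"
  using Rats_mult[of 2 "pi / 2"] pi_not_rat by auto

lemma angle_vertex_shift:
  assumes "q \<in> \<rat>"
  shows "angle_vertex (q - pi) = cis q" and "angle_vertex (q + pi) = cis q"
  by (simp_all add: angle_vertex_def pi_shift_not_rat[OF assms] minus_cis_minus_pi minus_cis_plus_pi)

lemma Arg_angle_vertex_divide:
  assumes "- (pi / 2) < u" "u < pi / 2" "- (pi / 2) < v" "v < pi / 2"
  shows "Arg (angle_vertex v / angle_vertex u) =
    (if u \<in> \<rat> \<longleftrightarrow> v \<in> \<rat> then v - u else if v \<le> u then v - u + pi else v - u - pi)"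
proof (cases "u \<in> \<rat> \<longleftrightarrow> v \<in> \<rat>")
  case True
  then have "angle_vertex v / angle_vertex u = cis (v - u)"
    by (auto simp: angle_vertex_def cis_divide)
  moreover have "Arg (cis (v - u)) = v - u" using assms by (intro Arg_cis) auto
  ultimately show ?thesis using True by simp
next
  case False
  then have quotient: "angle_vertex v / angle_vertex u = - cis (v - u)"
    by (auto simp: angle_vertex_def cis_divide)
  show ?thesis
  proof (cases "v \<le> u")
    case True
    have "Arg (cis (v - u + pi)) = v - u + pi" using True assms by (intro Arg_cis) auto
    then show ?thesis using False True quotient minus_cis_minus_pi[of "v - u + pi"] by simp
  next
    case le: False
    have "Arg (cis (v - u - pi)) = v - u - pi" using le assms by (intro Arg_cis) auto
    then show ?thesis using False le quotient minus_cis_plus_pi[of "v - u - pi"] by simp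
  qed
qed

lemma S2_arc_angle_vertex:
  assumes "- (pi / 2) < u" "u < pi / 2" "- (pi / 2) < v" "v < pi / 2"
  shows "S2_arc (angle_vertex u) (angle_vertex v) \<longleftrightarrow>
    (u \<in> \<rat> \<longleftrightarrow> v \<in> \<rat>) \<and> u < v \<or> \<not> (u \<in> \<rat> \<longleftrightarrow> v \<in> \<rat>) \<and> v < u"
  unfolding S2_arc_def Arg_angle_vertex_divide[OF assms] using assms by auto

lemma S2_vertex_eq_cis_Arg: "z \<in> S2_vertices \<Longrightarrow> z = cis (Arg z)"
  using rcis_cmod_Arg[of z] by (simp add: S2_vertices_def rcis_def)

lemma inj_on_angle_vertex: "inj_on angle_vertex S2_angles"
proof (rule inj_onI)
  fix u v assume "u \<in> S2_angles" "v \<in> S2_angles" and eq: "angle_vertex u = angle_vertex v"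
  then have bounds: "- (pi / 2) < u" "u < pi / 2" "- (pi / 2) < v" "v < pi / 2"
    by (auto simp: S2_angles_def)
  have "angle_vertex u \<noteq> 0" by (simp add: angle_vertex_def)
  then have "Arg (angle_vertex v / angle_vertex u) = 0" using eq by simp
  then show "u = v" using bounds unfolding Arg_angle_vertex_divide[OF bounds] by (auto split: if_splits)
qed

lemma angle_vertex_S2_angles_onto: "S2_vertices \<subseteq> angle_vertex ` S2_angles"
proof
  fix z assume z: "z \<in> S2_vertices"
  have "Arg z \<in> \<rat>" "- pi < Arg z" "Arg z \<le> pi"
    using z Arg_bounded[of z] by (auto simp: S2_vertices_def)
  moreover have "z = cis (Arg z)" using S2_vertex_eq_cis_Arg[OF z] .
  ultimately obtain t where t: "t \<in> \<rat>" "- pi < t" "t \<le> pi" and zt: "z = cis t" by blast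
  then have "Arg (cis t) \<in> \<rat>" by (simp add: Arg_cis)
  have "t \<noteq> pi / 2" "t \<noteq> - (pi / 2)"
    using t(1) pi_half_not_rat Rats_minus_iff by metis+
  then consider "- (pi / 2) < t \<and> t < pi / 2" | "pi / 2 < t" | "t < - (pi / 2)" by linarith
  then show "z \<in> angle_vertex ` S2_angles"
  proof cases
    case 1
    then have "t \<in> S2_angles" "angle_vertex t = z"
      using t zt \<open>Arg (cis t) \<in> \<rat>\<close> by (auto simp: S2_angles_def angle_vertex_def)
    then show ?thesis by blast
  next
    case 2
    have "angle_vertex (t - pi) = z"
      using angle_vertex_shift(1)[OF t(1)] zt by simp
    moreover have "t - pi \<in> S2_angles"
      using 2 t calculation \<open>Arg (cis t) \<in> \<rat>\<close> zt by (auto simp: S2_angles_def)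
    ultimately show ?thesis by blast
  next
    case 3
    have "angle_vertex (t + pi) = z"
      using angle_vertex_shift(2)[OF t(1)] zt by simp
    moreover have "t + pi \<in> S2_angles"
      using 3 t calculation \<open>Arg (cis t) \<in> \<rat>\<close> zt by (auto simp: S2_angles_def)
    ultimately show ?thesis by blast
  qed
qed

lemma bij_betw_angle_vertex: "bij_betw angle_vertex S2_angles S2_vertices"
proof -
  have "angle_vertex ` S2_angles \<subseteq> S2_vertices"
    by (auto simp: S2_angles_def S2_vertices_def angle_vertex_def)
  then show ?thesis
    using inj_on_angle_vertex angle_vertex_S2_angles_onto unfolding bij_betw_def by blast
qed

lemma countable_S2_angles: "countable S2_angles"
proof -
  have "S2_vertices \<subseteq> cis ` \<rat>"
  proof
    fix z assume z: "z \<in> S2_vertices"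
    then have "Arg z \<in> \<rat>" by (simp add: S2_vertices_def)
    with S2_vertex_eq_cis_Arg[OF z] show "z \<in> cis ` \<rat>" by (rule image_eqI)
  qed
  then have "countable S2_vertices" by (rule countable_subset) (simp add: countable_rat)
  then show ?thesis
    using bij_betw_angle_vertex countable_image_inj_on unfolding bij_betw_def by metis
qed

lemma S2_angles_dense:
  assumes "- (pi / 2) \<le> lo" "lo < hi" "hi \<le> pi / 2"
  shows "\<exists>u\<in>S2_angles. (u \<in> \<rat>) = col \<and> lo < u \<and> u < hi"
proof (cases col)
  case True
  obtain q where q: "q \<in> \<rat>" "lo < q" "q < hi" using Rats_dense_in_real[OF assms(2)] by blast
  then have "Arg (angle_vertex q) = q" using assms by (simp add: angle_vertex_def Arg_cis)
  then have "q \<in> S2_angles" using q assms by (simp add: S2_angles_def)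
  then show ?thesis using q True by blast
next
  case False
  consider "lo < 0" | "0 \<le> lo" by linarith
  then show ?thesis
  proof cases
    case 1
    then have "lo + pi < min hi 0 + pi" using assms by simp
    then obtain q where q: "q \<in> \<rat>" "lo + pi < q" "q < min hi 0 + pi" using Rats_dense_in_real by blast
    have "Arg (angle_vertex (q - pi)) = q"
      using q assms by (simp add: angle_vertex_shift Arg_cis)
    then have "q - pi \<in> S2_angles" using q assms by (simp add: S2_angles_def)
    then show ?thesis using q False pi_shift_not_rat(2)[OF q(1)] by (intro bexI[of _ "q - pi"]) auto
  next
    case 2
    have "lo - pi < hi - pi" using assms by simp
    then obtain q where q: "q \<in> \<rat>" "lo - pi < q" "q < hi - pi" using Rats_dense_in_real by blast
    have "Arg (angle_vertex (q + pi)) = q"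
      using q assms 2 by (simp add: angle_vertex_shift Arg_cis)
    then have "q + pi \<in> S2_angles" using q assms 2 by (simp add: S2_angles_def)
    then show ?thesis using q False pi_shift_not_rat(1)[OF q(1)] by (intro bexI[of _ "q + pi"]) auto
  qed
qed

lemma coloured_ext_prop_S2_angles: "coloured_ext_prop S2_angles (\<lambda>u. u \<in> \<rat>)"
proof (rule coloured_ext_propI)
  have bounds: "- (pi / 2) < u" "u < pi / 2" if "u \<in> S2_angles" for u
    using that by (simp_all add: S2_angles_def)
  show "\<exists>u\<in>S2_angles. (u \<in> \<rat>) = col \<and> lo < u \<and> u < hi"
    if "lo \<in> S2_angles" "hi \<in> S2_angles" "lo < hi" for lo hi col
    by (rule S2_angles_dense) (use bounds[OF that(1)] bounds[OF that(2)] that(3) in auto)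
  show "\<exists>u\<in>S2_angles. (u \<in> \<rat>) = col \<and> u < hi" if "hi \<in> S2_angles" for hi col
    using S2_angles_dense[of "- (pi / 2)" hi col] bounds[OF that] by auto
  show "\<exists>u\<in>S2_angles. (u \<in> \<rat>) = col \<and> lo < u" if "lo \<in> S2_angles" for lo col
    using S2_angles_dense[of lo "pi / 2" col] bounds[OF that] by auto
  have "0 \<in> S2_angles" by (simp add: S2_angles_def angle_vertex_def)
  then show "S2_angles \<noteq> {}" by blast
qed

theorem lemma4:
  fixes Q1 Q2 :: "rat set"
  assumes "Q1 \<union> Q2 = UNIV" and "Q1 \<inter> Q2 = {}"
    and "dense_in_rat Q1" and "dense_in_rat Q2"
  shows "\<exists>f. digraph_iso (UNIV :: rat set) (p_arc (<) Q1 Q2) S2_vertices S2_arc f"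
proof -
  obtain h where h: "bij_betw h (UNIV :: rat set) S2_angles"
    and mono: "\<And>a b. a < b \<longleftrightarrow> h a < h b" and colour: "\<And>a. a \<in> Q1 \<longleftrightarrow> h a \<in> \<rat>"
    using back_and_forth[OF countableI_type countable_S2_angles
        coloured_ext_prop_rat[OF assms(2-4)] coloured_ext_prop_S2_angles] by blast
  have same_part: "(a \<in> Q1 \<and> b \<in> Q1 \<or> a \<in> Q2 \<and> b \<in> Q2) \<longleftrightarrow> (h a \<in> \<rat> \<longleftrightarrow> h b \<in> \<rat>)" for a b
    using colour assms(1,2) by blast
  have bounds: "- (pi / 2) < h a" "h a < pi / 2" for a
    using bij_betwE[OF h] by (simp_all add: S2_angles_def)
  have "p_arc (<) Q1 Q2 a b \<longleftrightarrow> S2_arc (angle_vertex (h a)) (angle_vertex (h b))" for a b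
    unfolding p_arc_def Let_def same_part S2_arc_angle_vertex[OF bounds[of a] bounds[of b]] mono ..
  then have "digraph_iso UNIV (p_arc (<) Q1 Q2) S2_vertices S2_arc (angle_vertex \<circ> h)"
    unfolding digraph_iso_def using bij_betw_trans[OF h bij_betw_angle_vertex] by simp
  then show ?thesis by blast
qed

end
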